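(* Let $\mathbf{A}\in\mathbb{C}^{M\times N_a}$, $\mathbf{B}\in\mathbb{C}^{M\times N_b}$ have unit-$\ell_2$-norm columns with coherence parameters $\mu_a,\mu_b,\mu_m$. Let $\mathcal{X}\subseteq\{1,\dots,N_a\}$, $|\mathcal{X}|=n_x$, and $\mathcal{E}\subseteq\{1,\dots,N_b\}$, $|\mathcal{E}|=n_e$, and assume $$(1-\mu_a(n_x-1))\,[1-\mu_b(n_e-1)]^+>n_xn_e\mu_m^2 .$$ Then $1-\mu_b(n_e-1)>0$, $\mathbf{B}_{\mathcal{E}}^H\mathbf{B}_{\mathcal{E}}$ is invertible, and with $\mathbf{R}_{\mathcal{E}}=\mathbf{I}_M-\mathbf{B}_{\mathcal{E}}\mathbf{B}_{\mathcal{E}}^\dagger$ the matrix $\mathbf{A}_{\mathcal{X}}^H\mathbf{R}_{\mathcal{E}}\mathbf{A}_{\mathcal{X}}$ is invertible with $$\big\|(\mathbf{A}_{\mathcal{X}}^H\mathbf{R}_{\mathcal{E}}\mathbf{A}_{\mathcal{X}})^{-1}\big\|_2\le\frac{1}{1-\mu_a(n_x-1)-\dfrac{n_xn_e\mu_m^2}{1-\mu_b(n_e-1)}}.$$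
   Context: Coherence parameters: $\mu_a=\max_{k\ne\ell}|\mathbf{a}_k^H\mathbf{a}_\ell|$, $\mu_b=\max_{k\ne\ell}|\mathbf{b}_k^H\mathbf{b}_\ell|$, $\mu_m=\max_{k,\ell}|\mathbf{a}_k^H\mathbf{b}_\ell|$. $[x]^+=\max\{x,0\}$. $\mathbf{M}_{\mathcal{S}}$ is the column submatrix indexed by $\mathcal{S}$; $\mathbf{M}^\dagger=(\mathbf{M}^H\mathbf{M})^{-1}\mathbf{M}^H$; $\|\cdot\|_2$ of a matrix is the spectral norm. *)

theory Defs
  imports "Jordan_Normal_Form.Schur_Decomposition" "Jordan_Normal_Form.DL_Submatrix"
begin

definition vnorm2 :: "complex vec \<Rightarrow> real" where
  "vnorm2 v = sqrt (\<Sum>i<dim_vec v. (cmod (v $ i))\<^sup>2)"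

definition cinner :: "complex vec \<Rightarrow> complex vec \<Rightarrow> complex" where
  "cinner u v = (\<Sum>i<dim_vec u. cnj (u $ i) * v $ i)"

(* spectral norm (operator norm induced by l2); convention: 0 for a matrix with no columns *)
definition spec_norm :: "complex mat \<Rightarrow> real" where
  "spec_norm A = Sup ({0} \<union> {vnorm2 (A *\<^sub>v x) | x. x \<in> carrier_vec (dim_col A) \<and> vnorm2 x = 1})"

definition inv_mat :: "complex mat \<Rightarrow> complex mat" where
  "inv_mat A = (SOME B. B \<in> carrier_mat (dim_row A) (dim_row A) \<and> inverts_mat A B \<and> inverts_mat B A)"

(* Moore-Penrose pseudoinverse for full column rank: (M^H M)^{-1} M^H *)
definition pinv :: "complex mat \<Rightarrow> complex mat" where
  "pinv M = inv_mat (mat_adjoint M * M) * mat_adjoint M"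

(* column submatrix M_S (columns with indices in S, in increasing order) *)
definition colsub :: "complex mat \<Rightarrow> nat set \<Rightarrow> complex mat" where
  "colsub M S = submatrix M UNIV S"

definition coherence :: "complex mat \<Rightarrow> real" where
  "coherence A = Max ({0} \<union> {cmod (cinner (col A k) (col A l)) | k l.
      k < dim_col A \<and> l < dim_col A \<and> k \<noteq> l})"

definition mutual_coherence :: "complex mat \<Rightarrow> complex mat \<Rightarrow> real" where
  "mutual_coherence A B = Max ({0} \<union> {cmod (cinner (col A k) (col B l)) | k l.
      k < dim_col A \<and> l < dim_col B})"

definition pos_part :: "real \<Rightarrow> real" where
  "pos_part x = max x 0"

end

theory Submission
  imports Defs "HOL-Analysis.L2_Norm"
begin

(* Everything follows from
   lower bounds on quadratic forms ("coercivity"): a square matrix G with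
   c |x|^2 <= Re <x, G x> for some c > 0 is invertible and |G^{-1}|_2 <= 1/c. *)

section \<open>Norms and inner products of complex vectors\<close>

lemma vnorm2_eq_L2_set: "vnorm2 v = L2_set (\<lambda>i. cmod (v $ i)) {..<dim_vec v}"
  unfolding vnorm2_def L2_set_def ..

lemma vnorm2_nonneg: "vnorm2 v \<ge> 0"
  unfolding vnorm2_eq_L2_set by simp

lemma vnorm2_sq: "(vnorm2 v)\<^sup>2 = (\<Sum>i<dim_vec v. (cmod (v $ i))\<^sup>2)"
  unfolding vnorm2_def by (simp add: sum_nonneg)

lemma vnorm2_eq_0: assumes "z \<in> carrier_vec n" "vnorm2 z = 0" shows "z = 0\<^sub>v n"
proof -
  have "\<forall>i<dim_vec z. cmod (z $ i) = 0"
    using assms(2) L2_set_eq_0_iff[of "{..<dim_vec z}" "\<lambda>i. cmod (z $ i)"]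
    unfolding vnorm2_eq_L2_set by simp
  then show ?thesis using assms(1) by (intro eq_vecI) auto
qed

lemma cinner_self: "cinner v v = complex_of_real ((vnorm2 v)\<^sup>2)"
  unfolding cinner_def vnorm2_sq of_real_sum
  by (rule sum.cong) (auto simp: mult.commute, metis complex_norm_square of_real_power)

lemma cinner_conj: "dim_vec u = dim_vec v \<Longrightarrow> cnj (cinner u v) = cinner v u"
  unfolding cinner_def by (simp add: mult.commute)

lemma cinner_diff_right:
  "u \<in> carrier_vec n \<Longrightarrow> v \<in> carrier_vec n \<Longrightarrow> w \<in> carrier_vec n \<Longrightarrow>
   cinner u (v - w) = cinner u v - cinner u w"
  unfolding cinner_def by (simp add: sum_subtractf right_diff_distrib)

lemma cinner_zero_right: "z \<in> carrier_vec n \<Longrightarrow> cinner z (0\<^sub>v n) = 0"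
  unfolding cinner_def by simp

lemma cinner_Cauchy_Schwarz:
  assumes "dim_vec u = dim_vec v" shows "cmod (cinner u v) \<le> vnorm2 u * vnorm2 v"
proof -
  have "cmod (cinner u v) \<le> (\<Sum>i<dim_vec u. \<bar>cmod (u $ i)\<bar> * \<bar>cmod (v $ i)\<bar>)"
    unfolding cinner_def by (rule order.trans[OF norm_sum]) (simp add: norm_mult)
  also have "\<dots> \<le> vnorm2 u * vnorm2 v"
    unfolding vnorm2_eq_L2_set assms by (rule L2_set_mult_ineq)
  finally show ?thesis .
qed

lemma sum_abs_squared_le: fixes f :: "nat \<Rightarrow> real"
  shows "(\<Sum>i<n. \<bar>f i\<bar>)\<^sup>2 \<le> real n * (\<Sum>i<n. (f i)\<^sup>2)"
proof -
  have "(\<Sum>i<n. \<bar>f i\<bar> * \<bar>1\<bar>) \<le> L2_set f {..<n} * L2_set (\<lambda>_. 1) {..<n}"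
    by (rule L2_set_mult_ineq)
  then have "(\<Sum>i<n. \<bar>f i\<bar>) \<le> L2_set f {..<n} * sqrt (real n)"
    by (simp add: L2_set_constant)
  then have "(\<Sum>i<n. \<bar>f i\<bar>)\<^sup>2 \<le> (L2_set f {..<n} * sqrt (real n))\<^sup>2"
    by (rule power_mono) (simp add: sum_nonneg)
  then show ?thesis by (simp add: L2_set_def power_mult_distrib sum_nonneg mult.commute)
qed

lemma adjoint_carrier: "C \<in> carrier_mat m n \<Longrightarrow> mat_adjoint C \<in> carrier_mat n m"
  unfolding mat_adjoint_def carrier_mat_def by auto

lemma adjoint_index:
  "C \<in> carrier_mat m n \<Longrightarrow> i < n \<Longrightarrow> j < m \<Longrightarrow> mat_adjoint C $$ (i, j) = cnj (C $$ (j, i))"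
  unfolding mat_adjoint_def by (simp add: mat_of_rows_index)

lemma mult_mat_vec_index:
  "C \<in> carrier_mat m n \<Longrightarrow> z \<in> carrier_vec n \<Longrightarrow> i < m \<Longrightarrow>
   (C *\<^sub>v z) $ i = (\<Sum>k<n. C $$ (i, k) * z $ k)"
  by (auto simp: scalar_prod_def lessThan_atLeast0 intro!: sum.cong)

lemma adjoint_mult_vec_index:
  assumes "C \<in> carrier_mat m n" "v \<in> carrier_vec m" "l < n"
  shows "(mat_adjoint C *\<^sub>v v) $ l = cinner (col C l) v"
  using assms
  by (simp add: mult_mat_vec_index[OF adjoint_carrier[OF assms(1)] assms(2,3)] adjoint_index cinner_def)

lemma cinner_mult_mat_vec:
  assumes C: "C \<in> carrier_mat m n" and u: "u \<in> carrier_vec m" and z: "z \<in> carrier_vec n"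
  shows "cinner u (C *\<^sub>v z) = (\<Sum>k<n. cinner u (col C k) * z $ k)"
proof -
  have "cinner u (C *\<^sub>v z) = (\<Sum>i<m. cnj (u $ i) * (\<Sum>k<n. C $$ (i, k) * z $ k))"
    unfolding cinner_def using u z
    by (intro sum.cong) (auto simp: mult_mat_vec_index[OF C z] simp del: index_mult_mat_vec)
  also have "\<dots> = (\<Sum>k<n. \<Sum>i<m. cnj (u $ i) * C $$ (i, k) * z $ k)"
    by (simp add: sum_distrib_left sum.swap[of _ "{..<m}"] mult.assoc)
  also have "\<dots> = (\<Sum>k<n. cinner u (col C k) * z $ k)"
    unfolding cinner_def using C u by (auto simp: sum_distrib_right intro!: sum.cong)
  finally show ?thesis .
qed

lemma cinner_adjoint_left:
  assumes C: "C \<in> carrier_mat m n" and v: "v \<in> carrier_vec m" and z: "z \<in> carrier_vec n"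
  shows "cinner (mat_adjoint C *\<^sub>v v) z = cinner v (C *\<^sub>v z)"
proof -
  have "cinner (mat_adjoint C *\<^sub>v v) z = (\<Sum>l<n. cnj (cinner (col C l) v) * z $ l)"
    unfolding cinner_def[of "mat_adjoint C *\<^sub>v v"] using adjoint_carrier[OF C] v z
    by (intro sum.cong) (auto simp: adjoint_mult_vec_index[OF C v] simp del: index_mult_mat_vec)
  also have "\<dots> = (\<Sum>l<n. cinner v (col C l) * z $ l)"
    using C v by (auto intro!: sum.cong simp: cinner_conj)
  also have "\<dots> = cinner v (C *\<^sub>v z)" using cinner_mult_mat_vec[OF C v z] by simp
  finally show ?thesis .
qed

lemma cinner_adjoint_right:
  assumes C: "C \<in> carrier_mat m n" and v: "v \<in> carrier_vec m" and z: "z \<in> carrier_vec n"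
  shows "cinner z (mat_adjoint C *\<^sub>v v) = cinner (C *\<^sub>v z) v"
proof -
  have "cinner z (mat_adjoint C *\<^sub>v v) = cnj (cinner (mat_adjoint C *\<^sub>v v) z)"
    using adjoint_carrier[OF C] v z by (subst cinner_conj) auto
  also have "\<dots> = cnj (cinner v (C *\<^sub>v z))" using cinner_adjoint_left[OF assms] by simp
  also have "\<dots> = cinner (C *\<^sub>v z) v" using C v z by (subst cinner_conj) auto
  finally show ?thesis .
qed

section \<open>Coherence bounds for matrices with unit-norm columns\<close>

lemma norm_mult_vec_sq_gram:
  assumes C: "C \<in> carrier_mat m n" and z: "z \<in> carrier_vec n"
  shows "cinner (C *\<^sub>v z) (C *\<^sub>v z)
       = (\<Sum>l<n. \<Sum>k<n. cinner (col C k) (col C l) * cnj (z $ k) * z $ l)"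
proof -
  have Cz: "C *\<^sub>v z \<in> carrier_vec m" using C z by simp
  have entry: "cinner (C *\<^sub>v z) (col C l) = (\<Sum>k<n. cinner (col C k) (col C l) * cnj (z $ k))"
    if l: "l < n" for l
  proof -
    have cl: "col C l \<in> carrier_vec m" using C l by simp
    have "cinner (C *\<^sub>v z) (col C l) = cnj (cinner (col C l) (C *\<^sub>v z))"
      using cl Cz by (subst cinner_conj) auto
    also have "\<dots> = cnj (\<Sum>k<n. cinner (col C l) (col C k) * z $ k)"
      by (simp add: cinner_mult_mat_vec[OF C cl z])
    also have "\<dots> = (\<Sum>k<n. cinner (col C k) (col C l) * cnj (z $ k))"
      using C l by (auto simp: cinner_conj intro!: sum.cong)
    finally show ?thesis .
  qed
  show ?thesis
    unfolding cinner_mult_mat_vec[OF C Cz z] by (rule sum.cong) (auto simp: entry sum_distrib_right)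
qed

text \<open>The real inequality behind the Gershgorin-type bound: replacing all off-diagonal
  terms of the quadratic form by their worst case -mu s_k s_l.\<close>
lemma coherence_quadratic_lower:
  fixes s :: "nat \<Rightarrow> real" assumes mu: "\<mu> \<ge> 0"
  shows "(1 - \<mu> * (real n - 1)) * (\<Sum>k<n. (s k)\<^sup>2)
       \<le> (\<Sum>l<n. \<Sum>k<n. if k = l then (s k)\<^sup>2 else - \<mu> * \<bar>s k\<bar> * \<bar>s l\<bar>)"
proof -
  define T where "T = (\<Sum>k<n. \<bar>s k\<bar>)"
  define S where "S = (\<Sum>k<n. (s k)\<^sup>2)"
  have split: "(if k = l then (s k)\<^sup>2 else - \<mu> * \<bar>s k\<bar> * \<bar>s l\<bar>)
      = - \<mu> * \<bar>s k\<bar> * \<bar>s l\<bar> + (if k = l then (1 + \<mu>) * (s l)\<^sup>2 else 0)" for k l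
    by (simp add: power2_eq_square algebra_simps)
  have "(\<Sum>l<n. \<Sum>k<n. if k = l then (s k)\<^sup>2 else - \<mu> * \<bar>s k\<bar> * \<bar>s l\<bar>)
      = (1 + \<mu>) * S - \<mu> * T\<^sup>2"
    unfolding split sum.distrib S_def T_def
    by (simp add: sum_distrib_left sum_distrib_right power2_eq_square mult_ac sum_negf)
  moreover have "\<mu> * T\<^sup>2 \<le> \<mu> * (real n * S)"
    unfolding T_def S_def using sum_abs_squared_le mu by (rule mult_left_mono)
  ultimately show ?thesis unfolding S_def[symmetric] by (simp add: algebra_simps)
qed

text \<open>Lower bound on |C z| for unit-norm columns with pairwise coherence at most mu
  (Gershgorin's disc theorem for the Gram matrix C^H C).\<close>
lemma gram_lower:
  assumes C: "C \<in> carrier_mat m n" and unit: "\<And>k. k < n \<Longrightarrow> vnorm2 (col C k) = 1"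
    and coh: "\<And>k l. k < n \<Longrightarrow> l < n \<Longrightarrow> k \<noteq> l \<Longrightarrow> cmod (cinner (col C k) (col C l)) \<le> \<mu>"
    and mu: "\<mu> \<ge> 0" and z: "z \<in> carrier_vec n"
  shows "(1 - \<mu> * (real n - 1)) * (vnorm2 z)\<^sup>2 \<le> (vnorm2 (C *\<^sub>v z))\<^sup>2"
proof -
  let ?g = "\<lambda>k l. cinner (col C k) (col C l)"
  define s where "s k = cmod (z $ k)" for k
  have term_bound: "(if k = l then (s k)\<^sup>2 else - \<mu> * \<bar>s k\<bar> * \<bar>s l\<bar>)
      \<le> Re (?g k l * cnj (z $ k) * z $ l)" if kl: "k < n" "l < n" for k l
  proof (cases "k = l")
    case True
    have "?g k k = 1" using cinner_self[of "col C k"] unit[OF kl(1)] by simp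
    then have "?g k l * cnj (z $ k) * z $ l = complex_of_real ((s k)\<^sup>2)"
      using True by (simp add: s_def mult.commute) (metis complex_norm_square of_real_power)
    then show ?thesis using True by simp
  next
    case False
    have "cmod (?g k l * cnj (z $ k) * z $ l) = cmod (?g k l) * s k * s l"
      by (simp add: s_def norm_mult)
    also have "\<dots> \<le> \<mu> * s k * s l" using coh[OF kl False] by (simp add: s_def mult_right_mono)
    finally show ?thesis using False abs_Re_le_cmod[of "?g k l * cnj (z $ k) * z $ l"]
      by (simp add: s_def)
  qed
  have "(1 - \<mu> * (real n - 1)) * (vnorm2 z)\<^sup>2
      \<le> (\<Sum>l<n. \<Sum>k<n. if k = l then (s k)\<^sup>2 else - \<mu> * \<bar>s k\<bar> * \<bar>s l\<bar>)"
    using coherence_quadratic_lower[OF mu, of n s] z by (simp add: vnorm2_sq s_def)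
  also have "\<dots> \<le> (\<Sum>l<n. \<Sum>k<n. Re (?g k l * cnj (z $ k) * z $ l))"
    by (intro sum_mono term_bound) auto
  also have "\<dots> = Re (cinner (C *\<^sub>v z) (C *\<^sub>v z))"
    unfolding norm_mult_vec_sq_gram[OF C z] by (simp only: Re_sum)
  also have "\<dots> = (vnorm2 (C *\<^sub>v z))\<^sup>2"
    by (simp only: cinner_self Re_complex_of_real)
  finally show ?thesis .
qed

lemma cross_upper:
  assumes C: "C \<in> carrier_mat m p" and D: "D \<in> carrier_mat m n"
    and coh: "\<And>l k. l < p \<Longrightarrow> k < n \<Longrightarrow> cmod (cinner (col C l) (col D k)) \<le> \<nu>"
    and x: "x \<in> carrier_vec n"
  shows "(vnorm2 (mat_adjoint C *\<^sub>v (D *\<^sub>v x)))\<^sup>2 \<le> real p * real n * \<nu>\<^sup>2 * (vnorm2 x)\<^sup>2"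
proof -
  define T where "T = (\<Sum>k<n. \<bar>cmod (x $ k)\<bar>)"
  define w where "w = mat_adjoint C *\<^sub>v (D *\<^sub>v x)"
  have Dx: "D *\<^sub>v x \<in> carrier_vec m" using D x by simp
  have entry: "cmod (w $ l) \<le> \<nu> * T" if l: "l < p" for l
  proof -
    have cl: "col C l \<in> carrier_vec m" using C l by simp
    have "w $ l = (\<Sum>k<n. cinner (col C l) (col D k) * x $ k)"
      unfolding w_def adjoint_mult_vec_index[OF C Dx l] cinner_mult_mat_vec[OF D cl x] ..
    then have "cmod (w $ l) \<le> (\<Sum>k<n. cmod (cinner (col C l) (col D k)) * cmod (x $ k))"
      by (auto intro!: order.trans[OF norm_sum] simp: norm_mult)
    also have "\<dots> \<le> (\<Sum>k<n. \<nu> * cmod (x $ k))"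
      by (intro sum_mono mult_right_mono coh l) auto
    finally show ?thesis unfolding T_def by (simp add: sum_distrib_left)
  qed
  have "(vnorm2 w)\<^sup>2 = (\<Sum>l<p. (cmod (w $ l))\<^sup>2)"
    using vnorm2_sq[of w] adjoint_carrier[OF C] unfolding w_def by simp
  also have "\<dots> \<le> (\<Sum>l<p. (\<nu> * T)\<^sup>2)"
    by (intro sum_mono power_mono entry) auto
  also have "\<dots> = real p * \<nu>\<^sup>2 * T\<^sup>2" by (simp add: power_mult_distrib)
  also have "\<dots> \<le> real p * \<nu>\<^sup>2 * (real n * (vnorm2 x)\<^sup>2)"
    using sum_abs_squared_le[of "\<lambda>k. cmod (x $ k)" n] vnorm2_sq[of x] x unfolding T_def
    by (intro mult_left_mono) auto
  finally show ?thesis unfolding w_def by (simp add: mult_ac)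
qed

lemma coherence_bound:
  assumes "A \<in> carrier_mat m N" "k < N" "l < N" "k \<noteq> l"
  shows "cmod (cinner (col A k) (col A l)) \<le> coherence A"
proof -
  have "finite {cmod (cinner (col A k) (col A l)) | k l. k < dim_col A \<and> l < dim_col A \<and> k \<noteq> l}"
    by (rule finite_subset[of _ "(\<lambda>(k, l). cmod (cinner (col A k) (col A l))) ` ({..<dim_col A} \<times> {..<dim_col A})"])
      auto
  then show ?thesis unfolding coherence_def using assms by (intro Max_ge) auto
qed

lemma coherence_nonneg: "coherence A \<ge> 0"
proof -
  have "finite {cmod (cinner (col A k) (col A l)) | k l. k < dim_col A \<and> l < dim_col A \<and> k \<noteq> l}"
    by (rule finite_subset[of _ "(\<lambda>(k, l). cmod (cinner (col A k) (col A l))) ` ({..<dim_col A} \<times> {..<dim_col A})"])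
      auto
  then show ?thesis unfolding coherence_def by (intro Max_ge) auto
qed

lemma mutual_coherence_bound:
  assumes "A \<in> carrier_mat m Na" "B \<in> carrier_mat m Nb" "k < Na" "l < Nb"
  shows "cmod (cinner (col A k) (col B l)) \<le> mutual_coherence A B"
proof -
  have "finite {cmod (cinner (col A k) (col B l)) | k l. k < dim_col A \<and> l < dim_col B}"
    by (rule finite_subset[of _ "(\<lambda>(k, l). cmod (cinner (col A k) (col B l))) ` ({..<dim_col A} \<times> {..<dim_col B})"])
      auto
  then show ?thesis unfolding mutual_coherence_def using assms by (intro Max_ge) auto
qed

text \<open>The k-th column of A_X is the column of A indexed by the k-th smallest element of X.\<close>
lemma colsub_facts:
  assumes A: "A \<in> carrier_mat m N" and X: "X \<subseteq> {0..<N}"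
  shows colsub_carrier: "colsub A X \<in> carrier_mat m (card X)"
    and colsub_col: "\<And>k. k < card X \<Longrightarrow> col (colsub A X) k = col A (pick X k)"
    and colsub_pick_less: "\<And>k. k < card X \<Longrightarrow> pick X k < N"
    and colsub_pick_inj: "\<And>k l. k < card X \<Longrightarrow> l < card X \<Longrightarrow> k \<noteq> l \<Longrightarrow> pick X k \<noteq> pick X l"
proof -
  have cX: "{j. j < dim_col A \<and> j \<in> X} = X" using A X by auto
  have cR: "{i. i < dim_row A \<and> i \<in> UNIV} = {..<m}" using A by auto
  show cs: "colsub A X \<in> carrier_mat m (card X)"
    unfolding colsub_def carrier_mat_def using dim_submatrix[of A UNIV X] cX cR A by simp
  show pk: "pick X k < N" if "k < card X" for k
    using pick_in_set[of k X] that X by auto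
  show "col (colsub A X) k = col A (pick X k)" if k: "k < card X" for k
  proof (rule eq_vecI)
    show "dim_vec (col (colsub A X) k) = dim_vec (col A (pick X k))" using cs A by simp
    fix i assume "i < dim_vec (col A (pick X k))"
    then have i: "i < m" using A by simp
    have "col (colsub A X) k $ i = colsub A X $$ (i, k)" using cs i k by simp
    also have "\<dots> = A $$ (pick UNIV i, pick X k)" unfolding colsub_def
      by (rule submatrix_index) (use i k cX cR A in auto)
    also have "\<dots> = col A (pick X k) $ i" using A i pk[OF k] by (simp add: pick_UNIV)
    finally show "col (colsub A X) k $ i = col A (pick X k) $ i" .
  qed
  show "pick X k \<noteq> pick X l" if "k < card X" "l < card X" "k \<noteq> l" for k l
    using pick_mono[of k X l] pick_mono[of l X k] that by (cases "k < l") auto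
qed

lemma colsub_gram_lower:
  assumes A: "A \<in> carrier_mat m N" and unit: "\<And>k. k < N \<Longrightarrow> vnorm2 (col A k) = 1"
    and X: "X \<subseteq> {0..<N}" and x: "x \<in> carrier_vec (card X)"
  shows "(1 - coherence A * (real (card X) - 1)) * (vnorm2 x)\<^sup>2 \<le> (vnorm2 (colsub A X *\<^sub>v x))\<^sup>2"
proof (rule gram_lower[OF colsub_carrier[OF A X] _ _ coherence_nonneg x])
  fix k assume "k < card X"
  then show "vnorm2 (col (colsub A X) k) = 1"
    using colsub_col[OF A X] colsub_pick_less[OF A X] unit by simp
next
  fix k l assume "k < card X" "l < card X" "k \<noteq> l"
  then show "cmod (cinner (col (colsub A X) k) (col (colsub A X) l)) \<le> coherence A"
    using colsub_col[OF A X] colsub_pick_less[OF A X] colsub_pick_inj[OF A X]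
      coherence_bound[OF A] by simp
qed

lemma colsub_cross_upper:
  assumes A: "A \<in> carrier_mat m Na" and B: "B \<in> carrier_mat m Nb"
    and X: "X \<subseteq> {0..<Na}" and E: "E \<subseteq> {0..<Nb}" and x: "x \<in> carrier_vec (card X)"
  shows "(vnorm2 (mat_adjoint (colsub B E) *\<^sub>v (colsub A X *\<^sub>v x)))\<^sup>2
       \<le> real (card E) * real (card X) * (mutual_coherence A B)\<^sup>2 * (vnorm2 x)\<^sup>2"
proof (rule cross_upper[OF colsub_carrier[OF B E] colsub_carrier[OF A X] _ x])
  fix l k assume lk: "l < card E" "k < card X"
  have "cmod (cinner (col B (pick E l)) (col A (pick X k)))
      = cmod (cinner (col A (pick X k)) (col B (pick E l)))"
    using A B by (subst cinner_conj[symmetric]) (auto simp: complex_mod_cnj)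
  also have "\<dots> \<le> mutual_coherence A B"
    using mutual_coherence_bound[OF A B] colsub_pick_less[OF A X] colsub_pick_less[OF B E] lk
    by simp
  finally show "cmod (cinner (col (colsub B E) l) (col (colsub A X) k)) \<le> mutual_coherence A B"
    using colsub_col[OF A X] colsub_col[OF B E] lk by simp
qed

section \<open>Coercive matrices\<close>

definition coercive :: "real \<Rightarrow> complex mat \<Rightarrow> bool" where
  "coercive c G \<longleftrightarrow> (\<forall>x \<in> carrier_vec (dim_col G). c * (vnorm2 x)\<^sup>2 \<le> Re (cinner x (G *\<^sub>v x)))"

lemma inv_mat_of_trivial_kernel:
  assumes G: "G \<in> carrier_mat n n"
    and ker: "\<And>v. v \<in> carrier_vec n \<Longrightarrow> G *\<^sub>v v = 0\<^sub>v n \<Longrightarrow> v = 0\<^sub>v n"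
  shows "invertible_mat G \<and> inv_mat G \<in> carrier_mat n n \<and> G * inv_mat G = 1\<^sub>m n \<and> inv_mat G * G = 1\<^sub>m n"
proof -
  have "det G \<noteq> 0" using det_0_iff_vec_prod_zero[OF G] ker by auto
  from det_non_zero_imp_unit[OF G this, of "()"]
  obtain B where B: "B \<in> carrier_mat n n" "G * B = 1\<^sub>m n" "B * G = 1\<^sub>m n"
    unfolding Units_def ring_mat_def by auto
  then have "\<exists>B. B \<in> carrier_mat (dim_row G) (dim_row G) \<and> inverts_mat G B \<and> inverts_mat B G"
    using G unfolding inverts_mat_def by auto
  from someI_ex[OF this]
  have "inv_mat G \<in> carrier_mat n n \<and> inverts_mat G (inv_mat G) \<and> inverts_mat (inv_mat G) G"
    unfolding inv_mat_def using G by simp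
  then show ?thesis using G B unfolding invertible_mat_def inverts_mat_def by auto
qed

lemma coercive_inverse:
  assumes G: "G \<in> carrier_mat n n" and coer: "coercive c G" and c: "c > 0"
  shows "invertible_mat G \<and> inv_mat G \<in> carrier_mat n n \<and> G * inv_mat G = 1\<^sub>m n \<and> inv_mat G * G = 1\<^sub>m n"
proof (rule inv_mat_of_trivial_kernel[OF G])
  fix x assume x: "x \<in> carrier_vec n" and "G *\<^sub>v x = 0\<^sub>v n"
  then have "c * (vnorm2 x)\<^sup>2 \<le> 0"
    using coer G cinner_zero_right[OF x] unfolding coercive_def by force
  then have "vnorm2 x = 0" using c by (simp add: mult_le_0_iff)
  then show "x = 0\<^sub>v n" by (rule vnorm2_eq_0[OF x])
qed

lemma coercive_inverse_norm:
  assumes G: "G \<in> carrier_mat n n" and coer: "coercive c G" and c: "c > 0"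
  shows "spec_norm (inv_mat G) \<le> 1 / c"
proof -
  define Gi where "Gi = inv_mat G"
  have Gi: "Gi \<in> carrier_mat n n" and GGi: "G * Gi = 1\<^sub>m n"
    using coercive_inverse[OF assms] unfolding Gi_def by auto
  have bound: "vnorm2 (Gi *\<^sub>v y) \<le> 1 / c" if y: "y \<in> carrier_vec n" "vnorm2 y = 1" for y
  proof -
    define x where "x = Gi *\<^sub>v y"
    have x: "x \<in> carrier_vec n" unfolding x_def using Gi y by simp
    have "G *\<^sub>v x = y" unfolding x_def using G Gi y GGi by (simp flip: assoc_mult_mat_vec)
    then have "c * (vnorm2 x)\<^sup>2 \<le> Re (cinner x y)" using coer G x unfolding coercive_def by auto
    also have "\<dots> \<le> cmod (cinner x y)" by (rule complex_Re_le_cmod)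
    also have "\<dots> \<le> vnorm2 x" using cinner_Cauchy_Schwarz[of x y] x y by simp
    finally have "c * vnorm2 x * vnorm2 x \<le> 1 * vnorm2 x" by (simp add: power2_eq_square)
    then have "c * vnorm2 x \<le> 1"
      using vnorm2_nonneg[of x] by (cases "vnorm2 x = 0") (auto simp: mult_le_cancel_right)
    then show ?thesis unfolding x_def using c by (simp add: pos_le_divide_eq mult.commute)
  qed
  show ?thesis unfolding spec_norm_def Gi_def[symmetric]
    by (rule cSup_least) (use bound Gi c in auto)
qed

lemma coercive_inverse_form:
  assumes H: "H \<in> carrier_mat n n" and coer: "coercive \<beta> H" and \<beta>: "\<beta> > 0"
    and w: "w \<in> carrier_vec n"
  shows "Re (cinner w (inv_mat H *\<^sub>v w)) \<le> (vnorm2 w)\<^sup>2 / \<beta>"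
proof -
  define z where "z = inv_mat H *\<^sub>v w"
  have K: "inv_mat H \<in> carrier_mat n n" and HK: "H * inv_mat H = 1\<^sub>m n"
    using coercive_inverse[OF assms(1-3)] by auto
  have z: "z \<in> carrier_vec n" unfolding z_def using K w by simp
  have "H *\<^sub>v z = w" unfolding z_def using H K w HK by (simp flip: assoc_mult_mat_vec)
  then have "cinner w z = cnj (cinner z (H *\<^sub>v z))"
    using cinner_conj[of z "H *\<^sub>v z"] H z w by simp
  then have "Re (cinner w z) = Re (cinner z (H *\<^sub>v z))" by simp
  then have lower: "\<beta> * (vnorm2 z)\<^sup>2 \<le> Re (cinner w z)" using coer H z unfolding coercive_def by auto
  have upper: "Re (cinner w z) \<le> vnorm2 w * vnorm2 z"
    using complex_Re_le_cmod[of "cinner w z"] cinner_Cauchy_Schwarz[of w z] w z by simp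
  have "0 \<le> (vnorm2 w - \<beta> * vnorm2 z)\<^sup>2" by simp
  then have "2 * \<beta> * (vnorm2 w * vnorm2 z) \<le> (vnorm2 w)\<^sup>2 + \<beta> * (\<beta> * (vnorm2 z)\<^sup>2)"
    by (simp add: power2_eq_square algebra_simps)
  then have "\<beta> * Re (cinner w z) \<le> (vnorm2 w)\<^sup>2"
    using lower upper \<beta> mult_left_mono[OF upper, of \<beta>] mult_left_mono[OF lower, of \<beta>] by linarith
  then show ?thesis unfolding z_def using \<beta> by (simp add: pos_le_divide_eq mult.commute)
qed

lemma gram_coercive:
  assumes C: "C \<in> carrier_mat m n"
    and lower: "\<And>z. z \<in> carrier_vec n \<Longrightarrow> \<beta> * (vnorm2 z)\<^sup>2 \<le> (vnorm2 (C *\<^sub>v z))\<^sup>2"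
  shows "coercive \<beta> (mat_adjoint C * C)"
  unfolding coercive_def
proof
  fix z :: "complex vec" assume "z \<in> carrier_vec (dim_col (mat_adjoint C * C))"
  then have z: "z \<in> carrier_vec n" using C by simp
  have "cinner z ((mat_adjoint C * C) *\<^sub>v z) = cinner (C *\<^sub>v z) (C *\<^sub>v z)"
    using cinner_adjoint_right[OF C _ z, of "C *\<^sub>v z"] adjoint_carrier[OF C] C z by simp
  then show "\<beta> * (vnorm2 z)\<^sup>2 \<le> Re (cinner z ((mat_adjoint C * C) *\<^sub>v z))"
    using lower[OF z] by (simp add: cinner_self)
qed

section \<open>The projected Gram matrix\<close>

lemma projected_gram_form:
  assumes C: "C \<in> carrier_mat m n" and D: "D \<in> carrier_mat m p" and K: "K \<in> carrier_mat p p"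
    and x: "x \<in> carrier_vec n"
  shows "cinner x ((mat_adjoint C * (1\<^sub>m m - D * (K * mat_adjoint D)) * C) *\<^sub>v x)
       = cinner (C *\<^sub>v x) (C *\<^sub>v x)
         - cinner (mat_adjoint D *\<^sub>v (C *\<^sub>v x)) (K *\<^sub>v (mat_adjoint D *\<^sub>v (C *\<^sub>v x)))"
proof -
  define u where "u = C *\<^sub>v x"
  define w where "w = mat_adjoint D *\<^sub>v u"
  define R where "R = 1\<^sub>m m - D * (K * mat_adjoint D)"
  have adjC: "mat_adjoint C \<in> carrier_mat n m" and adjD: "mat_adjoint D \<in> carrier_mat p m"
    using adjoint_carrier C D by auto
  have P: "D * (K * mat_adjoint D) \<in> carrier_mat m m" using D K adjD by simp
  have R: "R \<in> carrier_mat m m" unfolding R_def using P by (rule minus_carrier_mat)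
  have u: "u \<in> carrier_vec m" unfolding u_def using C x by simp
  have w: "w \<in> carrier_vec p" unfolding w_def using adjD u by simp
  have Kw: "K *\<^sub>v w \<in> carrier_vec p" using K w by simp
  have Gx: "(mat_adjoint C * R * C) *\<^sub>v x = mat_adjoint C *\<^sub>v (R *\<^sub>v u)"
    unfolding u_def using assoc_mult_mat_vec[OF mult_carrier_mat[OF adjC R] C x]
      assoc_mult_mat_vec[OF adjC R, of "C *\<^sub>v x"] C x by simp
  have Ru: "R *\<^sub>v u = u - D *\<^sub>v (K *\<^sub>v w)"
    unfolding R_def w_def using minus_mult_distrib_mat_vec[OF one_carrier_mat P u] u
      assoc_mult_mat_vec[OF D mult_carrier_mat[OF K adjD] u] assoc_mult_mat_vec[OF K adjD u]
    by simp
  have "cinner x ((mat_adjoint C * R * C) *\<^sub>v x) = cinner u (R *\<^sub>v u)"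
    unfolding Gx u_def by (rule cinner_adjoint_right[OF C _ x]) (use R u u_def in simp)
  also have "\<dots> = cinner u u - cinner u (D *\<^sub>v (K *\<^sub>v w))"
    unfolding Ru by (rule cinner_diff_right[OF u u]) (use D Kw in simp)
  also have "cinner u (D *\<^sub>v (K *\<^sub>v w)) = cinner w (K *\<^sub>v w)"
    unfolding w_def by (rule cinner_adjoint_left[OF D u Kw[unfolded w_def], symmetric])
  finally show ?thesis unfolding R_def u_def w_def .
qed

lemma projected_gram_coercive:
  assumes C: "C \<in> carrier_mat m n" and D: "D \<in> carrier_mat m p"
    and lowC: "\<And>x. x \<in> carrier_vec n \<Longrightarrow> \<alpha> * (vnorm2 x)\<^sup>2 \<le> (vnorm2 (C *\<^sub>v x))\<^sup>2"
    and lowD: "\<And>z. z \<in> carrier_vec p \<Longrightarrow> \<beta> * (vnorm2 z)\<^sup>2 \<le> (vnorm2 (D *\<^sub>v z))\<^sup>2"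
    and cross: "\<And>x. x \<in> carrier_vec n \<Longrightarrow>
                  (vnorm2 (mat_adjoint D *\<^sub>v (C *\<^sub>v x)))\<^sup>2 \<le> r * (vnorm2 x)\<^sup>2"
    and \<beta>: "\<beta> > 0"
  shows "coercive (\<alpha> - r / \<beta>) (mat_adjoint C * (1\<^sub>m m - D * pinv D) * C)"
  unfolding coercive_def
proof
  define H where "H = mat_adjoint D * D"
  fix x :: "complex vec"
  assume "x \<in> carrier_vec (dim_col (mat_adjoint C * (1\<^sub>m m - D * pinv D) * C))"
  then have x: "x \<in> carrier_vec n" using C by simp
  define w where "w = mat_adjoint D *\<^sub>v (C *\<^sub>v x)"
  have H: "H \<in> carrier_mat p p" unfolding H_def using D adjoint_carrier[OF D] by simp
  have coerH: "coercive \<beta> H" unfolding H_def using gram_coercive[OF D lowD] .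
  have K: "inv_mat H \<in> carrier_mat p p" using coercive_inverse[OF H coerH \<beta>] by simp
  have w: "w \<in> carrier_vec p" unfolding w_def using adjoint_carrier[OF D] C x by simp
  have "Re (cinner w (inv_mat H *\<^sub>v w)) \<le> (vnorm2 w)\<^sup>2 / \<beta>"
    by (rule coercive_inverse_form[OF H coerH \<beta> w])
  also have "\<dots> \<le> r * (vnorm2 x)\<^sup>2 / \<beta>"
    using cross[OF x] \<beta> unfolding w_def by (simp add: divide_right_mono)
  finally have "Re (cinner w (inv_mat H *\<^sub>v w)) \<le> r * (vnorm2 x)\<^sup>2 / \<beta>" .
  moreover have "Re (cinner x ((mat_adjoint C * (1\<^sub>m m - D * pinv D) * C) *\<^sub>v x))
      = (vnorm2 (C *\<^sub>v x))\<^sup>2 - Re (cinner w (inv_mat H *\<^sub>v w))"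
    using projected_gram_form[OF C D K x] unfolding pinv_def H_def[symmetric] w_def
    by (simp add: cinner_self)
  ultimately show "(\<alpha> - r / \<beta>) * (vnorm2 x)\<^sup>2
      \<le> Re (cinner x ((mat_adjoint C * (1\<^sub>m m - D * pinv D) * C) *\<^sub>v x))"
    using lowC[OF x] by (simp add: algebra_simps)
qed

lemma coherence_condition:
  fixes \<alpha> \<beta> r :: real assumes cond: "\<alpha> * pos_part \<beta> > r" and r: "r \<ge> 0"
  shows "\<beta> > 0" and "\<alpha> - r / \<beta> > 0"
proof -
  show \<beta>: "\<beta> > 0"
  proof (rule ccontr)
    assume "\<not> \<beta> > 0"
    then have "pos_part \<beta> = 0" unfolding pos_part_def by simp
    then show False using cond r by simp
  qed
  then have "\<alpha> * \<beta> > r" using cond unfolding pos_part_def by simp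
  then show "\<alpha> - r / \<beta> > 0" using \<beta> by (simp add: pos_divide_less_eq)
qed

theorem mainTheorem8:
  fixes A B :: "complex mat" and M Na Nb :: nat and X E :: "nat set"
  assumes A_dim: "A \<in> carrier_mat M Na"
    and B_dim: "B \<in> carrier_mat M Nb"
    and A_unit: "\<And>k. k < Na \<Longrightarrow> vnorm2 (col A k) = 1"
    and B_unit: "\<And>k. k < Nb \<Longrightarrow> vnorm2 (col B k) = 1"
    and X_sub: "X \<subseteq> {0..<Na}"
    and E_sub: "E \<subseteq> {0..<Nb}"
    and cond: "(1 - coherence A * (real (card X) - 1)) * pos_part (1 - coherence B * (real (card E) - 1))
               > real (card X) * real (card E) * (mutual_coherence A B)\<^sup>2"
  shows "1 - coherence B * (real (card E) - 1) > 0
    \<and> invertible_mat (mat_adjoint (colsub B E) * colsub B E)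
    \<and> (let R = 1\<^sub>m M - colsub B E * pinv (colsub B E);
           G = mat_adjoint (colsub A X) * R * colsub A X
       in invertible_mat G
          \<and> spec_norm (inv_mat G) \<le> 1 / (1 - coherence A * (real (card X) - 1)
               - real (card X) * real (card E) * (mutual_coherence A B)\<^sup>2
                 / (1 - coherence B * (real (card E) - 1))))"
proof -
  define \<beta> where "\<beta> = 1 - coherence B * (real (card E) - 1)"
  define r where "r = real (card X) * real (card E) * (mutual_coherence A B)\<^sup>2"
  define G where "G = mat_adjoint (colsub A X) * (1\<^sub>m M - colsub B E * pinv (colsub B E)) * colsub A X"
  have AX: "colsub A X \<in> carrier_mat M (card X)" by (rule colsub_carrier[OF A_dim X_sub])
  have BE: "colsub B E \<in> carrier_mat M (card E)" by (rule colsub_carrier[OF B_dim E_sub])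
  have \<beta>: "\<beta> > 0" and c: "1 - coherence A * (real (card X) - 1) - r / \<beta> > 0"
    using coherence_condition[OF cond[folded \<beta>_def r_def]] unfolding r_def by auto
  have lowB: "\<And>z. z \<in> carrier_vec (card E) \<Longrightarrow> \<beta> * (vnorm2 z)\<^sup>2 \<le> (vnorm2 (colsub B E *\<^sub>v z))\<^sup>2"
    unfolding \<beta>_def by (rule colsub_gram_lower[OF B_dim B_unit E_sub])
  have coerH: "coercive \<beta> (mat_adjoint (colsub B E) * colsub B E)"
    by (rule gram_coercive[OF BE lowB])
  have coerG: "coercive (1 - coherence A * (real (card X) - 1) - r / \<beta>) G"
    unfolding G_def
  proof (rule projected_gram_coercive[OF AX BE colsub_gram_lower[OF A_dim A_unit X_sub] lowB _ \<beta>])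
    show "\<And>x. x \<in> carrier_vec (card X) \<Longrightarrow>
        (vnorm2 (mat_adjoint (colsub B E) *\<^sub>v (colsub A X *\<^sub>v x)))\<^sup>2 \<le> r * (vnorm2 x)\<^sup>2"
      using colsub_cross_upper[OF A_dim B_dim X_sub E_sub] unfolding r_def by (simp add: mult_ac)
  qed
  have G: "G \<in> carrier_mat (card X) (card X)"
    unfolding G_def carrier_mat_def using adjoint_carrier[OF AX] AX by auto
  have H: "mat_adjoint (colsub B E) * colsub B E \<in> carrier_mat (card E) (card E)"
    using adjoint_carrier[OF BE] BE by simp
  show ?thesis
    using \<beta> coercive_inverse[OF H coerH \<beta>] coercive_inverse[OF G coerG c]
      coercive_inverse_norm[OF G coerG c]
    unfolding Let_def G_def \<beta>_def r_def by blast
qed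

end
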